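(* Let $L>0$, $M>0$ and let $N$ satisfy $$0\le N\le \frac{4M}{L^3}\,\sigma(\sqrt M L).$$ Let $p\in L^1[0,L]$ and let $y\in W^{4,1}[0,L]$ be the solution of $$y^{(4)}(x)-My''(x)+N\int_0^L y(t)\,dt=p(x)\ \ \text{a.e. in }(0,L),\qquad y(0)=y(L)=y''(0)=y''(L)=0.$$ If $p\ge 0$ a.e., then $y\ge 0$ and $y''\le 0$ on $[0,L]$. If $p\le 0$ a.e., then $y\le0$ and $y''\ge 0$ on $[0,L]$.
   Context: For $t>0$, $$\sigma(t):=\frac{3t^3}{6t\cosh t+6t-12\sinh t-t^3}.$$ (The denominator is positive for $t>0$.) *)

theory Defs
  imports "HOL-Analysis.Analysis"
begin

definition sigma :: "real \<Rightarrow> real" where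
  "sigma t = 3 * t ^ 3 / (6 * t * cosh t + 6 * t - 12 * sinh t - t ^ 3)"

text \<open>Membership of y in W^{4,1}[0,L], with its derivatives made explicit:
  y, y1, y2 are continuously chained classical derivatives on [0,L] (one-sided at
  the endpoints), y3 is absolutely continuous, i.e. the indefinite integral of an
  L^1 function y4 (its a.e. derivative).\<close>
definition W41_on :: "real \<Rightarrow> (real \<Rightarrow> real) \<Rightarrow> (real \<Rightarrow> real) \<Rightarrow> (real \<Rightarrow> real)
    \<Rightarrow> (real \<Rightarrow> real) \<Rightarrow> (real \<Rightarrow> real) \<Rightarrow> bool" where
  "W41_on L y y1 y2 y3 y4 \<longleftrightarrow>
     (\<forall>x\<in>{0..L}. (y has_real_derivative y1 x) (at x within {0..L})
               \<and> (y1 has_real_derivative y2 x) (at x within {0..L})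
               \<and> (y2 has_real_derivative y3 x) (at x within {0..L}))
   \<and> y4 absolutely_integrable_on {0..L}
   \<and> (\<forall>x\<in>{0..L}. y3 x = y3 0 + integral {0..x} y4)"

end

theory Submission
  imports Defs
begin

(* Write k = sqrt M and I for the integral of y over [0, L]. The curvature u = y'' solves
   u'' - k^2 u = p - N I with u(0) = u(L) = 0, hence
     - k sinh (k L) u(x) = integral over s of G(x, s) (p(s) - N I)
   with an explicit nonnegative kernel G; integrating y'' = u twice against y(0) = y(L) = 0 gives
     I = integral over s of psi(s) (p(s) - N I)
   with psi the solution of psi'' - k^2 psi = - s (L - s) / 2 vanishing at 0 and L.
   Eliminating I, with c the integral of psi and W(x) the integral of G(x, -),
     (1 + N c) (- k sinh (k L)) u(x) = integral over s of ((1 + N c) G(x, s) - N W(x) psi(s)) p(s).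
   Hyperbolic estimates give W(x) psi(s) <= R G(x, s) for an explicit constant R, and R - c is D(k L) / (12 k^5)
   with D the denominator of sigma; so the hypothesis on N says precisely N (R - c) <= 1. The kernel in brackets
   is then nonnegative: p >= 0 forces y'' <= 0, and y >= 0 follows because y vanishes at both ends.
   For p <= 0 apply this to -y. *)

lemma integral_eq_diff_of_derivative:
  fixes F f :: "real \<Rightarrow> real"
  assumes "\<And>t. t \<in> {a..b} \<Longrightarrow> (F has_real_derivative f t) (at t within {a..b})"
    and "x \<in> {a..b}"
  shows "integral {a..x} f = F x - F a"
proof -
  have "(f has_integral (F x - F a)) {a..x}"
  proof (rule fundamental_theorem_of_calculus)
    show "a \<le> x" using assms(2) by simp
    fix t assume "t \<in> {a..x}"
    then have "t \<in> {a..b}" "{a..x} \<subseteq> {a..b}" using assms(2) by auto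
    then have "(F has_real_derivative f t) (at t within {a..x})"
      by (intro has_field_derivative_subset[OF assms(1)])
    then show "(F has_vector_derivative f t) (at t within {a..x})"
      by (simp add: has_real_derivative_iff_has_vector_derivative)
  qed
  then show ?thesis by (rule integral_unique)
qed

corollary integral_eq_diff_of_derivative_at:
  fixes F f :: "real \<Rightarrow> real"
  assumes "\<And>t. (F has_real_derivative f t) (at t)" and "a \<le> b"
  shows "integral {a..b} f = F b - F a"
  using assms(2) by (intro integral_eq_diff_of_derivative has_field_derivative_at_within[OF assms(1)]) auto

lemma indefinite_integral_rebase:
  fixes F f :: "real \<Rightarrow> real"
  assumes F: "\<And>x. x \<in> {a..b} \<Longrightarrow> F x = F a + integral {a..x} f"
    and f: "f integrable_on {a..b}" and "a \<le> c" and x: "x \<in> {c..b}"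
  shows "F x = F c + integral {c..x} f"
proof -
  have "f integrable_on {a..x}" using f x by (auto intro: integrable_on_subinterval)
  then have "integral {a..c} f + integral {c..x} f = integral {a..x} f"
    using x \<open>a \<le> c\<close> by (intro Henstock_Kurzweil_Integration.integral_combine) auto
  then show ?thesis using F[of x] F[of c] x \<open>a \<le> c\<close> by auto
qed

lemma continuous_on_if_indefinite_integral:
  fixes F f :: "real \<Rightarrow> real"
  assumes "\<And>x. x \<in> {a..b} \<Longrightarrow> F x = F a + integral {a..x} f" and "f integrable_on {a..b}"
  shows "continuous_on {a..b} F"
proof -
  have "continuous_on {a..b} (\<lambda>x. F a + integral {a..x} f)"
    by (intro continuous_intros indefinite_integral_continuous_1 assms(2))
  then show ?thesis using assms(1) by (metis (no_types, lifting) continuous_on_cong)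
qed

lemma nonneg_if_second_derivative_nonneg:
  fixes F F1 F2 :: "real \<Rightarrow> real"
  assumes F: "\<And>x. (F has_real_derivative F1 x) (at x)" and F1: "\<And>x. (F1 has_real_derivative F2 x) (at x)"
    and F2: "\<And>x. a \<le> x \<Longrightarrow> x \<le> b \<Longrightarrow> 0 \<le> F2 x"
    and "F a = 0" "F1 a = 0" and x: "a \<le> x" "x \<le> b"
  shows "0 \<le> F x"
proof -
  have "0 \<le> F1 t" if "a \<le> t" "t \<le> b" for t
    using DERIV_nonneg_imp_nondecreasing[OF that(1), of F1] F1 F2 that \<open>F1 a = 0\<close> by force
  then show ?thesis
    using DERIV_nonneg_imp_nondecreasing[OF x(1), of F] F x \<open>F a = 0\<close> by force
qed

lemma absolutely_integrable_continuous_mult: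
  fixes f g :: "real \<Rightarrow> real"
  assumes "continuous_on {a..b} f" and "g absolutely_integrable_on {a..b}"
  shows "(\<lambda>x. f x * g x) absolutely_integrable_on {a..b}"
  using assms by (intro absolutely_integrable_bounded_measurable_product_real)
    (auto intro: continuous_imp_measurable_on_sets_lebesgue compact_imp_bounded compact_continuous_image)

lemma absolutely_integrable_on_uminus:
  fixes f :: "real \<Rightarrow> real"
  shows "f absolutely_integrable_on S \<Longrightarrow> (\<lambda>x. - f x) absolutely_integrable_on S"
  unfolding absolutely_integrable_on_def by (simp add: integrable_neg)

lemma AE_lebesgue_obtain_negligible:
  assumes "AE x in lebesgue. x \<in> S \<longrightarrow> P x"
  obtains Z where "negligible Z" and "\<And>x. x \<in> S - Z \<Longrightarrow> P x"
proof -
  obtain Z where "\<And>x. x \<in> space lebesgue - Z \<Longrightarrow> x \<in> S \<longrightarrow> P x" and "Z \<in> null_sets lebesgue"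
    using AE_E3[OF assms] by blast
  then show ?thesis
    using that negligible_iff_null_sets by auto
qed

lemma integral_nonneg_AE_lebesgue:
  fixes f :: "real \<Rightarrow> real"
  assumes f: "f integrable_on S" and nonneg: "AE x in lebesgue. x \<in> S \<longrightarrow> 0 \<le> f x"
  shows "0 \<le> integral S f"
proof -
  obtain Z where Z: "negligible Z" and nonneg': "\<And>x. x \<in> S - Z \<Longrightarrow> 0 \<le> f x"
    using AE_lebesgue_obtain_negligible[OF nonneg] by blast
  define f' where "f' x = (if x \<in> Z then 0 else f x)" for x
  have "integral S f = integral S f'"
    by (rule integral_spike[OF Z]) (simp add: f'_def)
  moreover have "0 \<le> integral S f'"
    using integrable_spike[OF f Z, of f'] nonneg' by (intro integral_nonneg) (auto simp: f'_def)
  ultimately show ?thesis by simp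
qed

section \<open>Integration by parts against an indefinite integral\<close>

lemma const_if_increments_bounded:
  fixes \<Phi> V :: "real \<Rightarrow> real"
  assumes V: "continuous_on {a..b} V"
    and bound: "\<And>c d. a \<le> c \<Longrightarrow> c \<le> d \<Longrightarrow> d \<le> b \<Longrightarrow> \<bar>\<Phi> d - \<Phi> c\<bar> \<le> C * (d - c) * \<bar>V d - V c\<bar>"
    and x: "x \<in> {a..b}"
  shows "\<Phi> x = \<Phi> a"
proof -
  have bound': "\<bar>(\<Phi> d - \<Phi> c) / (d - c)\<bar> \<le> C * \<bar>V d - V c\<bar>"
    if "c \<in> {a..b}" "d \<in> {a..b}" "d \<noteq> c" for c d
  proof (cases "c \<le> d")
    case True
    then show ?thesis using bound[of c d] that by (simp add: divide_le_eq mult_ac)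
  next
    case False
    then show ?thesis using bound[of d c] that
      by (simp add: divide_le_eq mult_ac abs_minus_commute)
  qed
  have "(\<Phi> has_field_derivative 0) (at c within {a..b})" if c: "c \<in> {a..b}" for c
    unfolding has_field_derivative_iff
  proof (rule Lim_null_comparison)
    show "\<forall>\<^sub>F d in at c within {a..b}. norm ((\<Phi> d - \<Phi> c) / (d - c)) \<le> C * \<bar>V d - V c\<bar>"
      unfolding eventually_at_filter using bound'[OF c] by (auto intro: always_eventually)
    have "((\<lambda>d. V d - V c) \<longlongrightarrow> 0) (at c within {a..b})"
      using V c by (simp add: LIM_zero continuous_on_def)
    then show "((\<lambda>d. C * \<bar>V d - V c\<bar>) \<longlongrightarrow> 0) (at c within {a..b})"
      by (intro tendsto_mult_right_zero tendsto_rabs_zero)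
  qed
  then obtain K where "\<forall>x\<in>{a..b}. \<Phi> x = K"
    using has_field_derivative_zero_constant[of "{a..b}" \<Phi>] by auto
  then show ?thesis using x by (metis atLeastAtMost_iff order_refl order_trans)
qed

lemma integration_by_parts_defect_eq:
  fixes g g1 h Y :: "real \<Rightarrow> real"
  assumes cd: "c \<le> d"
    and g: "\<And>x. x \<in> {c..d} \<Longrightarrow> (g has_real_derivative g1 x) (at x within {c..d})"
    and g1: "continuous_on {c..d} g1"
    and h: "h absolutely_integrable_on {c..d}"
    and Y: "\<And>x. x \<in> {c..d} \<Longrightarrow> Y x = Y c + integral {c..x} h"
  shows "integral {c..d} (\<lambda>x. g x * h x) - (g d * Y d - g c * Y c) + integral {c..d} (\<lambda>x. g1 x * Y x)
       = integral {c..d} (\<lambda>x. (g x - g d) * h x) + integral {c..d} (\<lambda>x. g1 x * (Y x - Y c))"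
proof -
  have hi: "h integrable_on {c..d}"
    using h by (rule set_lebesgue_integral_eq_integral(1))
  have gc: "continuous_on {c..d} g"
    using g by (meson DERIV_continuous continuous_on_eq_continuous_within)
  have ghi: "(\<lambda>x. g x * h x) integrable_on {c..d}"
    using absolutely_integrable_continuous_mult[OF gc h] by (rule set_lebesgue_integral_eq_integral(1))
  have g1Yi: "(\<lambda>x. g1 x * Y x) integrable_on {c..d}"
    by (intro integrable_continuous_interval continuous_intros g1 continuous_on_if_indefinite_integral[OF Y hi])
  have g1i: "g1 integrable_on {c..d}"
    by (intro integrable_continuous_interval g1)
  have "integral {c..d} (\<lambda>x. (g x - g d) * h x) = integral {c..d} (\<lambda>x. g x * h x) - g d * integral {c..d} h"
    unfolding left_diff_distrib using ghi hi by (simp add: integral_diff integrable_on_mult_right)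
  moreover have "integral {c..d} (\<lambda>x. g1 x * (Y x - Y c)) = integral {c..d} (\<lambda>x. g1 x * Y x) - Y c * integral {c..d} g1"
    unfolding right_diff_distrib integral_diff[OF g1Yi integrable_on_mult_left[OF g1i]]
    by (simp add: mult.commute)
  moreover have "g d - g c = integral {c..d} g1"
    using integral_eq_diff_of_derivative[OF g, of d] cd by simp
  ultimately show ?thesis
    using Y[of d] cd by (simp add: algebra_simps)
qed

lemma integration_by_parts_error_bound:
  fixes g g1 h Y :: "real \<Rightarrow> real"
  assumes cd: "c \<le> d"
    and g: "\<And>x. x \<in> {c..d} \<Longrightarrow> (g has_real_derivative g1 x) (at x within {c..d})"
    and g1: "continuous_on {c..d} g1" and B: "\<And>x. x \<in> {c..d} \<Longrightarrow> \<bar>g1 x\<bar> \<le> B"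
    and h: "h absolutely_integrable_on {c..d}"
    and Y: "\<And>x. x \<in> {c..d} \<Longrightarrow> Y x = Y c + integral {c..x} h"
  shows "\<bar>integral {c..d} (\<lambda>x. g x * h x) - (g d * Y d - g c * Y c) + integral {c..d} (\<lambda>x. g1 x * Y x)\<bar>
         \<le> 2 * B * (d - c) * integral {c..d} (\<lambda>x. \<bar>h x\<bar>)"
proof -
  have hi: "h integrable_on {c..d}" and habs: "(\<lambda>x. \<bar>h x\<bar>) integrable_on {c..d}"
    using h by (simp_all add: absolutely_integrable_on_def)
  have gc: "continuous_on {c..d} g"
    using g by (meson DERIV_continuous continuous_on_eq_continuous_within)
  define H where "H = integral {c..d} (\<lambda>x. \<bar>h x\<bar>)"
  have "\<bar>integral {c..d} (\<lambda>x. (g x - g d) * h x)\<bar> \<le> integral {c..d} (\<lambda>x. B * (d - c) * \<bar>h x\<bar>)"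
  proof (rule integral_norm_bound_integral[where 'a=real, unfolded real_norm_def])
    show "(\<lambda>x. (g x - g d) * h x) integrable_on {c..d}"
      using absolutely_integrable_continuous_mult[OF _ h, of "\<lambda>x. g x - g d"] gc
      by (intro set_lebesgue_integral_eq_integral(1)) (simp add: continuous_intros)
    show "(\<lambda>x. B * (d - c) * \<bar>h x\<bar>) integrable_on {c..d}"
      by (intro integrable_on_mult_right habs)
    fix x assume x: "x \<in> {c..d}"
    have "\<bar>g x - g d\<bar> \<le> B * \<bar>x - d\<bar>"
      using field_differentiable_bound[of "{c..d}" g g1 B x d] g B x cd by auto
    also have "\<dots> \<le> B * (d - c)"
      using x B[OF x] by (intro mult_left_mono) auto
    finally show "\<bar>(g x - g d) * h x\<bar> \<le> B * (d - c) * \<bar>h x\<bar>"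
      by (simp add: abs_mult mult_right_mono)
  qed
  then have "\<bar>integral {c..d} (\<lambda>x. (g x - g d) * h x)\<bar> \<le> B * (d - c) * H"
    by (simp add: H_def)
  moreover have "\<bar>integral {c..d} (\<lambda>x. g1 x * (Y x - Y c))\<bar> \<le> integral {c..d} (\<lambda>x. B * H)"
  proof (rule integral_norm_bound_integral[where 'a=real, unfolded real_norm_def])
    show "(\<lambda>x. g1 x * (Y x - Y c)) integrable_on {c..d}"
      by (intro integrable_continuous_interval continuous_intros g1 continuous_on_if_indefinite_integral[OF Y hi])
    fix x assume x: "x \<in> {c..d}"
    have "\<bar>Y x - Y c\<bar> \<le> integral {c..x} (\<lambda>t. \<bar>h t\<bar>)"
      using Y[OF x] x integrable_on_subinterval[OF hi] integrable_on_subinterval[OF habs]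
      by (auto intro!: integral_norm_bound_integral[where 'a=real, unfolded real_norm_def])
    also have "\<dots> \<le> integral {c..d} (\<lambda>t. \<bar>h t\<bar>)"
      using x integrable_on_subinterval[OF habs] habs by (intro integral_subset_le) auto
    finally show "\<bar>g1 x * (Y x - Y c)\<bar> \<le> B * H"
      using B[OF x] by (simp add: H_def abs_mult mult_mono')
  qed auto
  then have "\<bar>integral {c..d} (\<lambda>x. g1 x * (Y x - Y c))\<bar> \<le> B * (d - c) * H"
    using cd by (simp add: mult_ac)
  moreover have "\<bar>integral {c..d} (\<lambda>x. g x * h x) - (g d * Y d - g c * Y c) + integral {c..d} (\<lambda>x. g1 x * Y x)\<bar>
      \<le> \<bar>integral {c..d} (\<lambda>x. (g x - g d) * h x)\<bar> + \<bar>integral {c..d} (\<lambda>x. g1 x * (Y x - Y c))\<bar>"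
    using integration_by_parts_defect_eq[OF cd g g1 h Y] abs_triangle_ineq by (simp only:)
  moreover have "2 * B * (d - c) * H = B * (d - c) * H + B * (d - c) * H"
    by simp
  ultimately show ?thesis
    unfolding H_def[symmetric] by linarith
qed

lemma integration_by_parts_indefinite_integral:
  fixes g g1 h Y :: "real \<Rightarrow> real"
  assumes ab: "a \<le> b"
    and g: "\<And>x. x \<in> {a..b} \<Longrightarrow> (g has_real_derivative g1 x) (at x within {a..b})"
    and g1: "continuous_on {a..b} g1"
    and h: "h absolutely_integrable_on {a..b}"
    and Y: "\<And>x. x \<in> {a..b} \<Longrightarrow> Y x = Y a + integral {a..x} h"
  shows "integral {a..b} (\<lambda>x. g x * h x) = g b * Y b - g a * Y a - integral {a..b} (\<lambda>x. g1 x * Y x)"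
proof -
  (* Y is only absolutely continuous, so the product rule for g Y holds merely almost everywhere.
     Instead, the defect \<Phi> has increments of order (d - c) |V d - V c|, so its derivative vanishes
     everywhere. *)
  define \<Phi> where "\<Phi> x = integral {a..x} (\<lambda>t. g t * h t) - g x * Y x + integral {a..x} (\<lambda>t. g1 t * Y t)" for x
  define V where "V x = integral {a..x} (\<lambda>t. \<bar>h t\<bar>)" for x
  have hi: "h integrable_on {a..b}" and habs: "(\<lambda>x. \<bar>h x\<bar>) integrable_on {a..b}"
    using h by (simp_all add: absolutely_integrable_on_def)
  have gc: "continuous_on {a..b} g"
    using g by (meson DERIV_continuous continuous_on_eq_continuous_within)
  have Yc: "continuous_on {a..b} Y"
    using Y hi by (rule continuous_on_if_indefinite_integral)
  have ghi: "(\<lambda>x. g x * h x) integrable_on {a..b}"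
    using absolutely_integrable_continuous_mult[OF gc h] by (simp add: absolutely_integrable_on_def)
  have g1Yi: "(\<lambda>x. g1 x * Y x) integrable_on {a..b}"
    by (intro integrable_continuous_interval continuous_intros g1 Yc)
  have "bounded (g1 ` {a..b})"
    by (intro compact_imp_bounded compact_continuous_image g1 compact_Icc)
  then obtain B where B: "\<And>x. x \<in> {a..b} \<Longrightarrow> \<bar>g1 x\<bar> \<le> B"
    unfolding bounded_real by blast
  have "\<bar>\<Phi> d - \<Phi> c\<bar> \<le> 2 * B * (d - c) * \<bar>V d - V c\<bar>" if cd: "a \<le> c" "c \<le> d" "d \<le> b" for c d
  proof -
    have sub: "{c..d} \<subseteq> {a..b}" using cd by auto
    have split: "integral {a..d} f - integral {a..c} f = integral {c..d} f"
      if "f integrable_on {a..b}" for f :: "real \<Rightarrow> real"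
      using Henstock_Kurzweil_Integration.integral_combine[of a c d f] cd
        integrable_on_subinterval[OF that, of a d] by auto
    have "\<Phi> d - \<Phi> c = integral {c..d} (\<lambda>x. g x * h x) - (g d * Y d - g c * Y c) + integral {c..d} (\<lambda>x. g1 x * Y x)"
      unfolding \<Phi>_def using split[OF ghi] split[OF g1Yi] by simp
    also have "\<bar>\<dots>\<bar> \<le> 2 * B * (d - c) * integral {c..d} (\<lambda>x. \<bar>h x\<bar>)"
    proof (rule integration_by_parts_error_bound[OF cd(2)])
      show "(g has_real_derivative g1 x) (at x within {c..d})" if "x \<in> {c..d}" for x
        using that sub by (intro has_field_derivative_subset[OF g]) auto
      show "Y x = Y c + integral {c..x} h" if "x \<in> {c..d}" for x
        using that cd by (intro indefinite_integral_rebase[OF Y hi]) auto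
      show "continuous_on {c..d} g1" using g1 sub by (rule continuous_on_subset)
      show "\<bar>g1 x\<bar> \<le> B" if "x \<in> {c..d}" for x using B that sub by auto
      show "h absolutely_integrable_on {c..d}" using h sub by (rule absolutely_integrable_on_subinterval)
    qed
    also have "integral {c..d} (\<lambda>x. \<bar>h x\<bar>) = \<bar>V d - V c\<bar>"
      unfolding V_def split[OF habs]
      using integrable_on_subinterval[OF habs sub] by (simp add: integral_nonneg)
    finally show ?thesis .
  qed
  then have "\<Phi> b = \<Phi> a"
    using ab by (intro const_if_increments_bounded[where V = V]) (auto simp: V_def intro: indefinite_integral_continuous_1 habs)
  then show ?thesis unfolding \<Phi>_def by simp
qed

lemma integration_by_parts_twice:
  fixes u u1 u2 g g1 g2 :: "real \<Rightarrow> real"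
  assumes ab: "a \<le> b"
    and u: "\<And>x. x \<in> {a..b} \<Longrightarrow> (u has_real_derivative u1 x) (at x within {a..b})"
    and u1: "\<And>x. x \<in> {a..b} \<Longrightarrow> u1 x = u1 a + integral {a..x} u2"
    and u2: "u2 absolutely_integrable_on {a..b}"
    and g: "\<And>x. (g has_real_derivative g1 x) (at x)"
    and g1: "\<And>x. (g1 has_real_derivative g2 x) (at x)"
    and g2: "continuous_on {a..b} g2"
  shows "integral {a..b} (\<lambda>x. g x * u2 x)
       = g b * u1 b - g a * u1 a - g1 b * u b + g1 a * u a + integral {a..b} (\<lambda>x. g2 x * u x)"
proof -
  have g1c: "continuous_on {a..b} g1"
    using DERIV_isCont[OF g1] by (simp add: continuous_at_imp_continuous_on)
  have u1c: "continuous_on {a..b} u1"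
    by (rule continuous_on_if_indefinite_integral[OF u1 set_lebesgue_integral_eq_integral(1)[OF u2]])
  have "integral {a..b} (\<lambda>x. g x * u2 x) = g b * u1 b - g a * u1 a - integral {a..b} (\<lambda>x. g1 x * u1 x)"
    by (rule integration_by_parts_indefinite_integral[OF ab has_field_derivative_at_within[OF g] g1c u2 u1])
  also have "integral {a..b} (\<lambda>x. g1 x * u1 x) = g1 b * u b - g1 a * u a - integral {a..b} (\<lambda>x. g2 x * u x)"
  proof (rule integration_by_parts_indefinite_integral[OF ab has_field_derivative_at_within[OF g1] g2])
    show "u1 absolutely_integrable_on {a..b}"
      by (rule absolutely_integrable_continuous_real[OF u1c])
    show "u x = u a + integral {a..x} u1" if "x \<in> {a..b}" for x
      using integral_eq_diff_of_derivative[OF u that] by simp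
  qed
  finally show ?thesis by simp
qed

section \<open>The kernels and their hyperbolic estimates\<close>

lemma tanh_less_self:
  fixes x :: real
  assumes "0 < x"
  shows "tanh x < x"
proof -
  have "(\<lambda>t. t - tanh t) 0 < (\<lambda>t. t - tanh t) x"
  proof (rule DERIV_pos_imp_increasing_open[OF assms])
    fix t :: real assume "0 < t"
    then show "\<exists>D. ((\<lambda>t. t - tanh t) has_real_derivative D) (at t) \<and> 0 < D"
      by (intro exI[of _ "tanh t ^ 2"]) (auto intro!: derivative_eq_intros)
  qed (intro continuous_intros, simp)
  then show ?thesis by simp
qed

lemma sinh_add_excess_bounds:
  fixes a b :: real
  assumes "0 \<le> a" "0 \<le> b"
  shows "0 \<le> sinh (a + b) - sinh a - sinh b"
    and "sinh (a + b) - sinh a - sinh b \<le> 2 * sinh ((a + b) / 2) ^ 2 * sinh a"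
proof -
  define h d where "h = (a + b) / 2" and "d = a - h"
  have sa: "sinh a = sinh h * cosh d + cosh h * sinh d"
    and sb: "sinh b = sinh h * cosh d - cosh h * sinh d"
    and ca: "cosh a = cosh h * cosh d + sinh h * sinh d"
    using sinh_add[of h d] sinh_diff[of h d] cosh_add[of h d] by (simp_all add: h_def d_def)
  have "sinh (a + b) = 2 * sinh h * cosh h"
    unfolding sinh_double[symmetric] by (simp add: h_def)
  then have excess: "sinh (a + b) - sinh a - sinh b = 2 * sinh h * (cosh h - cosh d)"
    by (simp add: sa sb algebra_simps)
  have "\<bar>d\<bar> \<le> h" "0 \<le> h"
    using assms unfolding h_def d_def by (auto simp: abs_if field_simps)
  then have "cosh d \<le> cosh h"
    using cosh_real_nonneg_le_iff[of "\<bar>d\<bar>" h] by simp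
  then show "0 \<le> sinh (a + b) - sinh a - sinh b"
    using assms by (simp add: excess h_def)
  have "2 * sinh h ^ 2 * sinh a - 2 * sinh h * (cosh h - cosh d) = 2 * sinh h * cosh h * (cosh a - 1)"
    using cosh_square_eq[of h] unfolding sa ca power2_eq_square by algebra
  moreover have "0 \<le> 2 * sinh h * cosh h * (cosh a - 1)"
    using \<open>0 \<le> h\<close> cosh_real_ge_1[of a] by simp
  ultimately show "sinh (a + b) - sinh a - sinh b \<le> 2 * sinh ((a + b) / 2) ^ 2 * sinh a"
    unfolding excess h_def[symmetric] by linarith
qed

(* k sinh (k L) times the Green function of - u'' + k^2 u = f, u(0) = u(L) = 0 *)
definition green_kernel :: "real \<Rightarrow> real \<Rightarrow> real \<Rightarrow> real \<Rightarrow> real" where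
  "green_kernel k L x s = sinh (k * min x s) * sinh (k * (L - max x s))"

lemma green_kernel_nonneg:
  assumes "0 \<le> k" "x \<in> {0..L}" "s \<in> {0..L}"
  shows "0 \<le> green_kernel k L x s"
  using assms by (simp add: green_kernel_def)

lemma continuous_on_green_kernel: "continuous_on S (green_kernel k L x)"
  unfolding green_kernel_def by (intro continuous_intros)

lemma integral_green_kernel_mult:
  fixes f :: "real \<Rightarrow> real"
  assumes f: "f absolutely_integrable_on {0..L}" and x: "x \<in> {0..L}"
  shows "integral {0..L} (\<lambda>s. green_kernel k L x s * f s)
       = sinh (k * (L - x)) * integral {0..x} (\<lambda>s. sinh (k * s) * f s)
         + sinh (k * x) * integral {x..L} (\<lambda>s. sinh (k * (L - s)) * f s)"
proof -
  have "(\<lambda>s. green_kernel k L x s * f s) integrable_on {0..L}"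
    using absolutely_integrable_continuous_mult[OF continuous_on_green_kernel f]
    by (rule set_lebesgue_integral_eq_integral(1))
  then have "integral {0..L} (\<lambda>s. green_kernel k L x s * f s)
      = integral {0..x} (\<lambda>s. green_kernel k L x s * f s) + integral {x..L} (\<lambda>s. green_kernel k L x s * f s)"
    using x by (simp add: Henstock_Kurzweil_Integration.integral_combine)
  also have "integral {0..x} (\<lambda>s. green_kernel k L x s * f s) = integral {0..x} (\<lambda>s. sinh (k * (L - x)) * (sinh (k * s) * f s))"
    by (intro integral_cong) (simp add: green_kernel_def)
  also have "integral {x..L} (\<lambda>s. green_kernel k L x s * f s) = integral {x..L} (\<lambda>s. sinh (k * x) * (sinh (k * (L - s)) * f s))"
    by (intro integral_cong) (simp add: green_kernel_def)
  finally show ?thesis by simp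
qed

lemma integral_green_kernel:
  assumes "0 < k" and x: "x \<in> {0..L}"
  shows "integral {0..L} (green_kernel k L x) = (sinh (k * L) - sinh (k * (L - x)) - sinh (k * x)) / k"
proof -
  have one: "(\<lambda>s::real. 1::real) absolutely_integrable_on {0..L}"
    by (intro absolutely_integrable_continuous_real continuous_intros)
  have I1: "integral {0..x} (\<lambda>s. sinh (k * s)) = cosh (k * x) / k - cosh (k * 0) / k"
    using x \<open>0 < k\<close> by (intro integral_eq_diff_of_derivative_at) (auto intro!: derivative_eq_intros)
  have I2: "integral {x..L} (\<lambda>s. sinh (k * (L - s))) = - cosh (k * (L - L)) / k - (- cosh (k * (L - x)) / k)"
    using x \<open>0 < k\<close> by (intro integral_eq_diff_of_derivative_at) (auto intro!: derivative_eq_intros)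
  define a b where "a = k * (L - x)" and "b = k * x"
  have "integral {0..L} (green_kernel k L x) = sinh a * ((cosh b - 1) / k) + sinh b * ((cosh a - 1) / k)"
    using integral_green_kernel_mult[OF one x, of k] I1 I2 by (simp add: a_def b_def diff_divide_distrib)
  moreover have "sinh (k * L) = sinh a * cosh b + cosh a * sinh b"
    unfolding sinh_add[symmetric] by (simp add: a_def b_def algebra_simps)
  ultimately show ?thesis
    using \<open>0 < k\<close> unfolding a_def[symmetric] b_def[symmetric]
    by (simp only:) (simp add: field_simps)
qed

lemma green_mass_bounds:
  fixes k L x :: real
  assumes "0 < k" and x: "x \<in> {0..L}"
  defines "W \<equiv> (sinh (k * L) - sinh (k * (L - x)) - sinh (k * x)) / k"
  shows "0 \<le> W"
    and "W \<le> 2 * sinh (k * L / 2) ^ 2 * sinh (k * x) / k"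
    and "W \<le> 2 * sinh (k * L / 2) ^ 2 * sinh (k * (L - x)) / k"
proof -
  have ab: "0 \<le> k * x" "0 \<le> k * (L - x)"
    using \<open>0 < k\<close> x by simp_all
  have kL: "k * x + k * (L - x) = k * L"
    by (simp add: algebra_simps)
  show "0 \<le> W"
    using sinh_add_excess_bounds(1)[OF ab] \<open>0 < k\<close> by (simp add: W_def kL)
  show "W \<le> 2 * sinh (k * L / 2) ^ 2 * sinh (k * x) / k"
    using sinh_add_excess_bounds(2)[OF ab] \<open>0 < k\<close> by (simp add: W_def kL divide_right_mono)
  show "W \<le> 2 * sinh (k * L / 2) ^ 2 * sinh (k * (L - x)) / k"
    using sinh_add_excess_bounds(2)[OF ab(2,1)] \<open>0 < k\<close> by (simp add: W_def kL add.commute divide_right_mono)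
qed

(* psi'' - k^2 psi = - s (L - s) / 2, psi(0) = psi(L) = 0 *)
definition area_kernel :: "real \<Rightarrow> real \<Rightarrow> real \<Rightarrow> real" where
  "area_kernel k L s = s * (L - s) / (2 * k^2) - 1 / k^4 + cosh (k * (s - L / 2)) / (k^4 * cosh (k * L / 2))"

lemma area_kernel_has_derivative:
  assumes "k \<noteq> 0"
  shows "(area_kernel k L has_real_derivative
           (L - 2 * s) / (2 * k^2) + sinh (k * (s - L / 2)) / (k^3 * cosh (k * L / 2))) (at s)"
  unfolding area_kernel_def[abs_def] using assms
  by (auto intro!: derivative_eq_intros simp: field_simps eval_nat_numeral)

lemma continuous_on_area_kernel:
  assumes "k \<noteq> 0"
  shows "continuous_on S (area_kernel k L)"
  using DERIV_isCont[OF area_kernel_has_derivative[OF assms]] by (simp add: continuous_at_imp_continuous_on)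

lemma area_kernel_derivative_has_derivative:
  assumes "k \<noteq> 0"
  shows "((\<lambda>s. (L - 2 * s) / (2 * k^2) + sinh (k * (s - L / 2)) / (k^3 * cosh (k * L / 2)))
           has_real_derivative k^2 * area_kernel k L s - s * (L - s) / 2) (at s)"
  unfolding area_kernel_def using assms
  by (auto intro!: derivative_eq_intros simp: field_simps eval_nat_numeral)

lemma area_kernel_antiderivative:
  assumes "k \<noteq> 0"
  shows "((\<lambda>s. (L * s^2 / 2 - s^3 / 3) / (2 * k^2) - s / k^4 + sinh (k * (s - L / 2)) / (k^5 * cosh (k * L / 2)))
           has_real_derivative area_kernel k L s) (at s)"
  unfolding area_kernel_def using assms
  by (auto intro!: derivative_eq_intros simp: field_simps eval_nat_numeral)

lemma area_kernel_boundary: "area_kernel k L 0 = 0" "area_kernel k L L = 0"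
proof -
  have "k * (0 - L / 2) = - (k * L / 2)" "k * (L - L / 2) = k * L / 2"
    by (simp_all add: algebra_simps)
  then show "area_kernel k L 0 = 0" "area_kernel k L L = 0"
    unfolding area_kernel_def by (simp_all add: field_simps)
qed

lemma area_kernel_symmetric: "area_kernel k L (L - s) = area_kernel k L s"
proof -
  have "k * (L - s - L / 2) = - (k * (s - L / 2))"
    by (simp add: algebra_simps)
  then show ?thesis unfolding area_kernel_def by (simp add: mult.commute)
qed

lemma integral_area_kernel:
  assumes "0 < k" "0 \<le> L"
  shows "integral {0..L} (area_kernel k L) = L^3 / (12 * k^2) - L / k^4 + 2 * tanh (k * L / 2) / k^5"
proof -
  define \<Psi> where "\<Psi> s = (L * s^2 / 2 - s^3 / 3) / (2 * k^2) - s / k^4 + sinh (k * (s - L / 2)) / (k^5 * cosh (k * L / 2))" for s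
  have "integral {0..L} (area_kernel k L) = \<Psi> L - \<Psi> 0"
    unfolding \<Psi>_def using assms by (intro integral_eq_diff_of_derivative_at area_kernel_antiderivative) auto
  moreover have "k * (0 - L / 2) = - (k * L / 2)" "k * (L - L / 2) = k * L / 2"
    by (simp_all add: algebra_simps)
  ultimately show ?thesis
    using \<open>0 < k\<close> by (simp add: \<Psi>_def tanh_def field_simps eval_nat_numeral)
qed

lemma area_kernel_le:
  fixes k L s :: real
  assumes k: "0 < k" and L: "0 < L" and s: "s \<in> {0..L}"
  shows "area_kernel k L s \<le> (k * L / 2 - tanh (k * L / 2)) / k^4 * sinh (k * s)"
proof -
  define h where "h = k * L / 2"
  define c where "c = h - tanh h"
  have c: "0 \<le> c" using tanh_less_self[of h] k L by (simp add: c_def h_def)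
  have ch: "0 < cosh h" by simp
  define F where "F x = c * sinh (k * x) - (k^2 * x * (L - x) / 2 - 1 + cosh (k * (x - L / 2)) / cosh h)" for x
  define F1 where "F1 x = c * k * cosh (k * x) - (k^2 * (L - 2 * x) / 2 + k * sinh (k * (x - L / 2)) / cosh h)" for x
  define F2 where "F2 x = c * k^2 * sinh (k * x) + k^2 - k^2 * cosh (k * (x - L / 2)) / cosh h" for x
  have "(F has_real_derivative F1 x) (at x)" for x
    unfolding F_def[abs_def] F1_def by (auto intro!: derivative_eq_intros simp: field_simps power2_eq_square)
  moreover have "(F1 has_real_derivative F2 x) (at x)" for x
    unfolding F1_def[abs_def] F2_def by (auto intro!: derivative_eq_intros simp: field_simps power2_eq_square)
  moreover have "0 \<le> F2 x" if "0 \<le> x" "x \<le> L" for x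
  proof -
    have "cosh (k * (x - L / 2)) = cosh \<bar>k * (x - L / 2)\<bar>" by simp
    also have "\<dots> \<le> cosh h"
    proof -
      have "\<bar>x - L / 2\<bar> \<le> L / 2" using that by arith
      then have "\<bar>k * (x - L / 2)\<bar> \<le> h"
        using mult_left_mono[of _ _ k] k by (simp add: h_def abs_mult)
      then show ?thesis
        using cosh_real_nonneg_le_iff[of "\<bar>k * (x - L / 2)\<bar>" h] k L by (simp add: h_def)
    qed
    finally have "k^2 * cosh (k * (x - L / 2)) / cosh h \<le> k^2"
      using ch by (simp add: divide_le_eq mult_left_mono)
    moreover have "0 \<le> c * k^2 * sinh (k * x)" using c k that by simp
    ultimately show ?thesis unfolding F2_def by linarith
  qed
  moreover have "F 0 = 0" "F1 0 = 0"
    using ch by (simp_all add: F_def F1_def c_def h_def tanh_def field_simps power2_eq_square)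
  ultimately have "0 \<le> F s"
    using s by (intro nonneg_if_second_derivative_nonneg[of F F1 F2 0 L]) auto
  moreover have "k^4 * area_kernel k L s = k^2 * s * (L - s) / 2 - 1 + cosh (k * (s - L / 2)) / cosh h"
    using k by (simp add: area_kernel_def h_def field_simps eval_nat_numeral)
  ultimately have "k^4 * area_kernel k L s \<le> c * sinh (k * s)"
    by (simp add: F_def)
  then show ?thesis
    using k by (simp add: c_def h_def field_simps)
qed

definition kernel_ratio_bound :: "real \<Rightarrow> real \<Rightarrow> real" where
  "kernel_ratio_bound k L = 2 * sinh (k * L / 2)^2 * (k * L / 2 - tanh (k * L / 2)) / k^5"

lemma kernel_ratio_bound_pos:
  assumes "0 < k" "0 < L"
  shows "0 < kernel_ratio_bound k L"
  using assms tanh_less_self[of "k * L / 2"] by (simp add: kernel_ratio_bound_def)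

lemma green_mass_mult_area_kernel_le:
  fixes k L x s :: real
  assumes k: "0 < k" and L: "0 < L" and x: "x \<in> {0..L}" and s: "s \<in> {0..L}"
  shows "(sinh (k * L) - sinh (k * (L - x)) - sinh (k * x)) / k * area_kernel k L s
         \<le> kernel_ratio_bound k L * green_kernel k L x s"
proof -
  define W where "W = (sinh (k * L) - sinh (k * (L - x)) - sinh (k * x)) / k"
  define c where "c = k * L / 2 - tanh (k * L / 2)"
  have c: "0 \<le> c" using tanh_less_self[of "k * L / 2"] k L by (simp add: c_def)
  have bound: "W * area_kernel k L s \<le> kernel_ratio_bound k L * (A * B)"
    if WA: "W \<le> 2 * sinh (k * L / 2)^2 * A / k" and psiB: "area_kernel k L s \<le> c / k^4 * B"
      and "0 \<le> A" "0 \<le> B" for A B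
  proof -
    have "W * area_kernel k L s \<le> W * (c / k^4 * B)"
      using psiB green_mass_bounds(1)[OF k x] by (intro mult_left_mono) (simp_all add: W_def)
    also have "\<dots> \<le> (2 * sinh (k * L / 2)^2 * A / k) * (c / k^4 * B)"
      using WA c k \<open>0 \<le> B\<close> by (intro mult_right_mono) simp_all
    also have "\<dots> = kernel_ratio_bound k L * (A * B)"
      using k by (simp add: kernel_ratio_bound_def c_def field_simps eval_nat_numeral)
    finally show ?thesis .
  qed
  show ?thesis
  proof (cases "s \<le> x")
    case True
    then have "green_kernel k L x s = sinh (k * (L - x)) * sinh (k * s)"
      by (simp add: green_kernel_def)
    moreover have "area_kernel k L s \<le> c / k^4 * sinh (k * s)"
      using area_kernel_le[OF k L s] by (simp add: c_def)
    ultimately show ?thesis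
      using bound green_mass_bounds(3)[OF k x] x s k by (simp add: W_def)
  next
    case False
    then have "green_kernel k L x s = sinh (k * x) * sinh (k * (L - s))"
      by (simp add: green_kernel_def mult.commute)
    moreover have "area_kernel k L s \<le> c / k^4 * sinh (k * (L - s))"
      using area_kernel_le[OF k L, of "L - s"] s by (simp add: c_def area_kernel_symmetric)
    ultimately show ?thesis
      using bound green_mass_bounds(2)[OF k x] x s k by (simp add: W_def)
  qed
qed

lemma kernel_ratio_bound_minus_integral:
  fixes k L :: real
  assumes k: "0 < k" and L: "0 < L"
  shows "kernel_ratio_bound k L - integral {0..L} (area_kernel k L)
       = (6 * (k * L) * cosh (k * L) + 6 * (k * L) - 12 * sinh (k * L) - (k * L)^3) / (12 * k^5)"
proof -
  define h S C where "h = k * L / 2" and "S = sinh h" and "C = cosh h"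
  have kL: "k * L = 2 * h" by (simp add: h_def)
  have C: "0 < C" by (simp add: C_def)
  have CS: "C^2 = S^2 + 1" by (simp add: C_def S_def cosh_square_eq)
  have ch: "cosh (2 * h) = 2 * S^2 + 1" and sh: "sinh (2 * h) = 2 * S * C"
    unfolding S_def C_def using cosh_double[of h] cosh_square_eq[of h] sinh_double[of h] by simp_all
  have I: "integral {0..L} (area_kernel k L) = ((2 * h)^3 / 12 - 2 * h + 2 * S / C) / k^5"
    using k L kL[symmetric] by (simp add: integral_area_kernel h_def S_def C_def tanh_def field_simps eval_nat_numeral)
  have R: "kernel_ratio_bound k L = 2 * S^2 * (h - S / C) / k^5"
    by (simp add: kernel_ratio_bound_def h_def S_def C_def tanh_def)
  have SC: "S^3 / C + S / C = S * C"
    using C CS by (simp add: field_simps power2_eq_square power3_eq_cube) algebra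
  have "2 * S^2 * (h - S / C) - ((2 * h)^3 / 12 - 2 * h + 2 * S / C)
      = 2 * S^2 * h + 2 * h - (2 * h)^3 / 12 - 2 * (S^3 / C + S / C)"
    by (simp add: field_simps power2_eq_square power3_eq_cube)
  also have "\<dots> = (6 * (2 * h) * (2 * S^2 + 1) + 6 * (2 * h) - 12 * (2 * S * C) - (2 * h)^3) / 12"
    unfolding SC by (simp add: field_simps)
  finally have num: "2 * S^2 * (h - S / C) - ((2 * h)^3 / 12 - 2 * h + 2 * S / C)
      = (6 * (2 * h) * (2 * S^2 + 1) + 6 * (2 * h) - 12 * (2 * S * C) - (2 * h)^3) / 12" .
  show ?thesis
    unfolding I R kL ch sh diff_divide_distrib[symmetric] num by simp
qed

lemma sigma_bound_imp_kernel_gap_le: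
  fixes k L N :: real
  assumes k: "0 < k" and L: "0 < L" and N: "0 \<le> N" and N_le: "N \<le> 4 * k^2 / L^3 * sigma (k * L)"
  shows "N * (kernel_ratio_bound k L - integral {0..L} (area_kernel k L)) \<le> 1"
proof -
  define t D where "t = k * L" and "D = 6 * t * cosh t + 6 * t - 12 * sinh t - t^3"
  have "4 * k^2 / L^3 * sigma (k * L) = 12 * k^5 / D"
    using L by (simp add: sigma_def t_def D_def field_simps eval_nat_numeral)
  then have N_le': "N \<le> 12 * k^5 / D"
    using N_le by simp
  have "N * D \<le> 12 * k^5"
  proof (cases "0 < D")
    case True
    then show ?thesis using N_le' by (simp add: pos_le_divide_eq)
  next
    case False
    then have "N * D \<le> 0" using N by (simp add: mult_nonneg_nonpos)
    moreover have "0 < 12 * k^5" using k by simp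
    ultimately show ?thesis by linarith
  qed
  then show ?thesis
    unfolding kernel_ratio_bound_minus_integral[OF k L] t_def[symmetric] D_def[symmetric]
    using k by (simp add: field_simps)
qed

lemma one_plus_mult_integral_area_kernel_pos:
  fixes k L N :: real
  assumes k: "0 < k" and L: "0 < L" and N: "0 \<le> N"
    and gap: "N * (kernel_ratio_bound k L - integral {0..L} (area_kernel k L)) \<le> 1"
  shows "0 < 1 + N * integral {0..L} (area_kernel k L)"
proof (cases "N = 0")
  case False
  then have "0 < N * kernel_ratio_bound k L"
    using N kernel_ratio_bound_pos[OF k L] by simp
  then show ?thesis using gap by (simp add: algebra_simps)
qed simp

lemma load_kernel_nonneg:
  fixes k L N x s :: real
  assumes k: "0 < k" and L: "0 < L" and N: "0 \<le> N"
    and gap: "N * (kernel_ratio_bound k L - integral {0..L} (area_kernel k L)) \<le> 1"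
    and x: "x \<in> {0..L}" and s: "s \<in> {0..L}"
  shows "N * integral {0..L} (green_kernel k L x) * area_kernel k L s
         \<le> (1 + N * integral {0..L} (area_kernel k L)) * green_kernel k L x s"
proof -
  have "integral {0..L} (green_kernel k L x) * area_kernel k L s \<le> kernel_ratio_bound k L * green_kernel k L x s"
    using green_mass_mult_area_kernel_le[OF k L x s] by (simp add: integral_green_kernel[OF k x])
  then have "N * integral {0..L} (green_kernel k L x) * area_kernel k L s
      \<le> N * kernel_ratio_bound k L * green_kernel k L x s"
    using N by (simp add: mult.assoc mult_left_mono)
  also have "\<dots> \<le> (1 + N * integral {0..L} (area_kernel k L)) * green_kernel k L x s"
    using gap green_kernel_nonneg[OF _ x s, of k] k by (intro mult_right_mono) (simp_all add: algebra_simps)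
  finally show ?thesis .
qed

section \<open>The boundary value problem\<close>

locale nonlocal_beam =
  fixes L M N :: real and p y y1 y2 y3 y4 :: "real \<Rightarrow> real"
  assumes L_pos: "0 < L" and M_pos: "0 < M"
    and load_integrable: "p absolutely_integrable_on {0..L}"
    and regular: "W41_on L y y1 y2 y3 y4"
    and equation: "AE x in lebesgue. x \<in> {0..L} \<longrightarrow> y4 x - M * y2 x + N * integral {0..L} y = p x"
    and boundary: "y 0 = 0" "y L = 0" "y2 0 = 0" "y2 L = 0"
begin

abbreviation k :: real where "k \<equiv> sqrt M"

abbreviation I :: real where "I \<equiv> integral {0..L} y"

lemma k_pos: "0 < k"
  using M_pos by simp

lemma deflection_derivatives:
  assumes "x \<in> {0..L}"
  shows "(y has_real_derivative y1 x) (at x within {0..L})"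
    and "(y1 has_real_derivative y2 x) (at x within {0..L})"
    and "(y2 has_real_derivative y3 x) (at x within {0..L})"
  using regular assms unfolding W41_on_def by blast+

lemma continuous_on_y2: "continuous_on {0..L} y2"
  using deflection_derivatives(3) by (meson DERIV_continuous continuous_on_eq_continuous_within)

lemma equation_rhs_absolutely_integrable: "(\<lambda>x. p x + M * y2 x - N * I) absolutely_integrable_on {0..L}"
proof -
  have "(\<lambda>x. M * y2 x - N * I) absolutely_integrable_on {0..L}"
    by (intro absolutely_integrable_continuous_real continuous_intros continuous_on_y2)
  then have "(\<lambda>x. p x + (M * y2 x - N * I)) absolutely_integrable_on {0..L}"
    by (rule set_integral_add(1)[OF load_integrable])
  then show ?thesis by (simp add: add_diff_eq)
qed

lemma y3_eq_indefinite_integral: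
  assumes x: "x \<in> {0..L}"
  shows "y3 x = y3 0 + integral {0..x} (\<lambda>t. p t + M * y2 t - N * I)"
proof -
  obtain Z where Z: "negligible Z" and y4: "\<And>t. t \<in> {0..L} - Z \<Longrightarrow> y4 t - M * y2 t + N * I = p t"
    using AE_lebesgue_obtain_negligible[OF equation] by blast
  have "integral {0..x} y4 = integral {0..x} (\<lambda>t. p t + M * y2 t - N * I)"
  proof (rule integral_spike[OF Z])
    fix t assume "t \<in> {0..x} - Z"
    then have "y4 t - M * y2 t + N * I = p t" using x by (intro y4) auto
    then show "p t + M * y2 t - N * I = y4 t" by simp
  qed
  moreover have "y3 x = y3 0 + integral {0..x} y4"
    using regular x unfolding W41_on_def by blast
  ultimately show ?thesis by simp
qed

lemma integral_load_by_parts: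
  fixes g g1 g2 :: "real \<Rightarrow> real"
  assumes ab: "0 \<le> a" "a \<le> b" "b \<le> L"
    and g: "\<And>x. (g has_real_derivative g1 x) (at x)" and g1: "\<And>x. (g1 has_real_derivative g2 x) (at x)"
    and g2: "continuous_on {a..b} g2"
  shows "integral {a..b} (\<lambda>x. g x * p x) - N * I * integral {a..b} g
       = g b * y3 b - g a * y3 a - g1 b * y2 b + g1 a * y2 a + integral {a..b} (\<lambda>x. (g2 x - M * g x) * y2 x)"
proof -
  have sub: "{a..b} \<subseteq> {0..L}" using ab by auto
  have gc: "continuous_on {a..b} g"
    using DERIV_isCont[OF g] by (simp add: continuous_at_imp_continuous_on)
  have y2c: "continuous_on {a..b} y2"
    using continuous_on_y2 sub by (rule continuous_on_subset)
  have gp: "(\<lambda>x. g x * p x) integrable_on {a..b}"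
    using absolutely_integrable_continuous_mult[OF gc absolutely_integrable_on_subinterval[OF load_integrable sub]]
    by (rule set_lebesgue_integral_eq_integral(1))
  have gy2: "(\<lambda>x. g x * y2 x) integrable_on {a..b}" and gi: "g integrable_on {a..b}"
    by (intro integrable_continuous_interval continuous_intros gc y2c)+
  have g2y2: "(\<lambda>x. g2 x * y2 x) integrable_on {a..b}"
    by (intro integrable_continuous_interval continuous_intros g2 y2c)
  have "integral {a..b} (\<lambda>x. g x * (p x + M * y2 x - N * I))
      = g b * y3 b - g a * y3 a - g1 b * y2 b + g1 a * y2 a + integral {a..b} (\<lambda>x. g2 x * y2 x)"
  proof (rule integration_by_parts_twice[OF ab(2) _ _ _ g g1 g2])
    show "(y2 has_real_derivative y3 x) (at x within {a..b})" if "x \<in> {a..b}" for x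
      using that sub by (intro has_field_derivative_subset[OF deflection_derivatives(3)]) auto
    show "y3 x = y3 a + integral {a..x} (\<lambda>t. p t + M * y2 t - N * I)" if "x \<in> {a..b}" for x
      using that ab
      by (intro indefinite_integral_rebase[OF y3_eq_indefinite_integral
            set_lebesgue_integral_eq_integral(1)[OF equation_rhs_absolutely_integrable]]) auto
    show "(\<lambda>t. p t + M * y2 t - N * I) absolutely_integrable_on {a..b}"
      using equation_rhs_absolutely_integrable sub by (rule absolutely_integrable_on_subinterval)
  qed
  moreover have "integral {a..b} (\<lambda>x. g x * (p x + M * y2 x - N * I))
      = integral {a..b} (\<lambda>x. g x * p x) + M * integral {a..b} (\<lambda>x. g x * y2 x) - N * I * integral {a..b} g"
  proof -
    have "integral {a..b} (\<lambda>x. g x * (p x + M * y2 x - N * I))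
        = integral {a..b} (\<lambda>x. (g x * p x + M * (g x * y2 x)) - N * I * g x)"
      by (rule integral_cong) (simp add: algebra_simps)
    then show ?thesis
      using gp integrable_on_mult_right[OF gy2, of M] integrable_on_mult_right[OF gi, of "N * I"]
      by (simp add: integral_diff integral_add integrable_add)
  qed
  moreover have "integral {a..b} (\<lambda>x. (g2 x - M * g x) * y2 x)
      = integral {a..b} (\<lambda>x. g2 x * y2 x) - M * integral {a..b} (\<lambda>x. g x * y2 x)"
    using g2y2 integrable_on_mult_right[OF gy2, of M]
    by (simp add: left_diff_distrib integral_diff mult.assoc)
  ultimately show ?thesis by simp
qed

lemma integral_y2_by_parts:
  fixes g g1 g2 :: "real \<Rightarrow> real"
  assumes ab: "0 \<le> a" "a \<le> b" "b \<le> L"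
    and g: "\<And>x. (g has_real_derivative g1 x) (at x)" and g1: "\<And>x. (g1 has_real_derivative g2 x) (at x)"
    and g2: "continuous_on {a..b} g2"
  shows "integral {a..b} (\<lambda>x. g x * y2 x)
       = g b * y1 b - g a * y1 a - g1 b * y b + g1 a * y a + integral {a..b} (\<lambda>x. g2 x * y x)"
proof (rule integration_by_parts_twice[OF ab(2) _ _ _ g g1 g2])
  have sub: "{a..b} \<subseteq> {0..L}" using ab by auto
  show "(y has_real_derivative y1 x) (at x within {a..b})" if "x \<in> {a..b}" for x
    using that sub by (intro has_field_derivative_subset[OF deflection_derivatives(1)]) auto
  have "(y1 has_real_derivative y2 x) (at x within {a..b})" if "x \<in> {a..b}" for x
    using that sub by (intro has_field_derivative_subset[OF deflection_derivatives(2)]) auto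
  then show "y1 x = y1 a + integral {a..x} y2" if "x \<in> {a..b}" for x
    using integral_eq_diff_of_derivative[of a b y1 y2 x] that by simp
  show "y2 absolutely_integrable_on {a..b}"
    by (intro absolutely_integrable_continuous_real continuous_on_subset[OF continuous_on_y2 sub])
qed

lemma y2_green_representation:
  assumes x: "x \<in> {0..L}"
  shows "integral {0..L} (\<lambda>s. green_kernel k L x s * p s) - N * I * integral {0..L} (green_kernel k L x)
       = - k * sinh (k * L) * y2 x"
proof -
  have d1: "((\<lambda>s. sinh (k * s)) has_real_derivative k * cosh (k * s)) (at s)"
    and d2: "((\<lambda>s. k * cosh (k * s)) has_real_derivative k * k * sinh (k * s)) (at s)"
    and d3: "((\<lambda>s. sinh (k * (L - s))) has_real_derivative - k * cosh (k * (L - s))) (at s)"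
    and d4: "((\<lambda>s. - k * cosh (k * (L - s))) has_real_derivative k * k * sinh (k * (L - s))) (at s)" for s
    by (auto intro!: derivative_eq_intros)
  have c: "continuous_on S (\<lambda>s. k * k * sinh (k * s))" "continuous_on S (\<lambda>s. k * k * sinh (k * (L - s)))" for S
    by (intro continuous_intros)+
  have left: "integral {0..x} (\<lambda>s. sinh (k * s) * p s) - N * I * integral {0..x} (\<lambda>s. sinh (k * s))
      = sinh (k * x) * y3 x - k * cosh (k * x) * y2 x"
    using integral_load_by_parts[OF _ _ _ d1 d2 c(1)] x boundary M_pos by simp
  have right: "integral {x..L} (\<lambda>s. sinh (k * (L - s)) * p s) - N * I * integral {x..L} (\<lambda>s. sinh (k * (L - s)))
      = - sinh (k * (L - x)) * y3 x - k * cosh (k * (L - x)) * y2 x"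
    using integral_load_by_parts[OF _ _ _ d3 d4 c(2)] x boundary M_pos by simp
  have one: "(\<lambda>s::real. 1::real) absolutely_integrable_on {0..L}"
    by (intro absolutely_integrable_continuous_real continuous_intros)
  have "integral {0..L} (\<lambda>s. green_kernel k L x s * p s) - N * I * integral {0..L} (green_kernel k L x)
      = sinh (k * (L - x)) * (integral {0..x} (\<lambda>s. sinh (k * s) * p s) - N * I * integral {0..x} (\<lambda>s. sinh (k * s)))
        + sinh (k * x) * (integral {x..L} (\<lambda>s. sinh (k * (L - s)) * p s) - N * I * integral {x..L} (\<lambda>s. sinh (k * (L - s))))"
    using integral_green_kernel_mult[OF load_integrable x, of k] integral_green_kernel_mult[OF one x, of k]
    by (simp add: algebra_simps)
  also have "\<dots> = - k * (sinh (k * (L - x)) * cosh (k * x) + cosh (k * (L - x)) * sinh (k * x)) * y2 x"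
    unfolding left right by (simp add: algebra_simps)
  also have "sinh (k * (L - x)) * cosh (k * x) + cosh (k * (L - x)) * sinh (k * x) = sinh (k * L)"
    using sinh_add[of "k * (L - x)" "k * x"] by (simp add: algebra_simps)
  finally show ?thesis .
qed

lemma integral_parabola_mult_y2: "integral {0..L} (\<lambda>s. s * (L - s) / 2 * y2 s) = - I"
proof -
  have "((\<lambda>s. s * (L - s) / 2) has_real_derivative (L - 2 * s) / 2) (at s)"
    and "((\<lambda>s. (L - 2 * s) / 2) has_real_derivative -1) (at s)" for s
    by (auto intro!: derivative_eq_intros simp: field_simps)
  from integral_y2_by_parts[OF _ _ _ this] show ?thesis
    using L_pos boundary by simp
qed

lemma integral_y_representation:
  "integral {0..L} (\<lambda>s. area_kernel k L s * p s) - N * I * integral {0..L} (area_kernel k L) = I"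
proof -
  have d1: "(area_kernel k L has_real_derivative
      (L - 2 * s) / (2 * k^2) + sinh (k * (s - L / 2)) / (k^3 * cosh (k * L / 2))) (at s)"
    and d2: "((\<lambda>s. (L - 2 * s) / (2 * k^2) + sinh (k * (s - L / 2)) / (k^3 * cosh (k * L / 2)))
      has_real_derivative k^2 * area_kernel k L s - s * (L - s) / 2) (at s)" for s
    using k_pos by (intro area_kernel_has_derivative area_kernel_derivative_has_derivative; simp)+
  have "continuous_on {0..L} (area_kernel k L)"
    using k_pos by (simp add: continuous_on_area_kernel)
  then have c: "continuous_on {0..L} (\<lambda>s. k^2 * area_kernel k L s - s * (L - s) / 2)"
    by (intro continuous_intros) auto
  have "integral {0..L} (\<lambda>s. area_kernel k L s * p s) - N * I * integral {0..L} (area_kernel k L)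
      = integral {0..L} (\<lambda>s. (k^2 * area_kernel k L s - s * (L - s) / 2 - M * area_kernel k L s) * y2 s)"
    using integral_load_by_parts[OF _ _ _ d1 d2 c] L_pos boundary by (simp add: area_kernel_boundary)
  also have "\<dots> = integral {0..L} (\<lambda>s. - (s * (L - s) / 2 * y2 s))"
    using M_pos by (intro integral_cong) (simp add: algebra_simps)
  also have "\<dots> = I"
    by (simp only: integral_neg integral_parabola_mult_y2 minus_minus)
  finally show ?thesis .
qed

lemma y_green_representation:
  assumes x: "x \<in> {0..L}"
  shows "L * y x = - ((L - x) * integral {0..x} (\<lambda>t. t * y2 t)) - x * integral {x..L} (\<lambda>t. (L - t) * y2 t)"
proof -
  have d: "((\<lambda>t. t) has_real_derivative 1) (at t)" "((\<lambda>t. 1) has_real_derivative 0) (at t)"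
    "((\<lambda>t. L - t) has_real_derivative -1) (at t)" "((\<lambda>t. -1) has_real_derivative 0) (at t)" for t :: real
    by (auto intro!: derivative_eq_intros)
  have left: "integral {0..x} (\<lambda>t. t * y2 t) = x * y1 x - y x"
    using integral_y2_by_parts[where a = 0 and b = x, OF _ _ _ d(1,2)] x boundary by simp
  have right: "integral {x..L} (\<lambda>t. (L - t) * y2 t) = (x - L) * y1 x - y x"
    using integral_y2_by_parts[where a = x and b = L, OF _ _ _ d(3,4)] x boundary by (simp add: algebra_simps)
  show ?thesis
    unfolding left right by (simp add: algebra_simps)
qed

lemma y_nonneg_if_y2_nonpos:
  assumes y2: "\<And>t. t \<in> {0..L} \<Longrightarrow> y2 t \<le> 0" and x: "x \<in> {0..L}"
  shows "0 \<le> y x"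
proof -
  have y2c: "continuous_on {a..b} y2" if "0 \<le> a" "b \<le> L" for a b
    using continuous_on_y2 by (rule continuous_on_subset) (use that in auto)
  have "integral {0..x} (\<lambda>t. t * y2 t) \<le> integral {0..x} (\<lambda>t. 0)"
    using x y2 by (intro integral_le integrable_continuous_interval continuous_intros y2c)
      (auto intro: mult_nonneg_nonpos)
  moreover have "integral {x..L} (\<lambda>t. (L - t) * y2 t) \<le> integral {x..L} (\<lambda>t. 0)"
    using x y2 by (intro integral_le integrable_continuous_interval continuous_intros y2c)
      (auto intro: mult_nonneg_nonpos)
  ultimately have "(L - x) * integral {0..x} (\<lambda>t. t * y2 t) \<le> 0" "x * integral {x..L} (\<lambda>t. (L - t) * y2 t) \<le> 0"
    using x by (simp_all add: mult_nonneg_nonpos)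
  then have "0 \<le> L * y x"
    using y_green_representation[OF x] by linarith
  then show ?thesis using L_pos by (simp add: zero_le_mult_iff)
qed

lemma y2_load_representation:
  assumes x: "x \<in> {0..L}"
  defines "c \<equiv> integral {0..L} (area_kernel k L)" and "W \<equiv> integral {0..L} (green_kernel k L x)"
  shows "(1 + N * c) * (- k * sinh (k * L) * y2 x)
       = integral {0..L} (\<lambda>s. ((1 + N * c) * green_kernel k L x s - N * W * area_kernel k L s) * p s)"
proof -
  define G A where "G = integral {0..L} (\<lambda>s. green_kernel k L x s * p s)"
    and "A = integral {0..L} (\<lambda>s. area_kernel k L s * p s)"
  have Gp: "(\<lambda>s. green_kernel k L x s * p s) integrable_on {0..L}"
    by (intro set_lebesgue_integral_eq_integral(1) absolutely_integrable_continuous_mult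
        load_integrable continuous_on_green_kernel)
  have Ap: "(\<lambda>s. area_kernel k L s * p s) integrable_on {0..L}"
    using k_pos by (intro set_lebesgue_integral_eq_integral(1) absolutely_integrable_continuous_mult
        load_integrable continuous_on_area_kernel) simp
  have "integral {0..L} (\<lambda>s. ((1 + N * c) * green_kernel k L x s - N * W * area_kernel k L s) * p s)
      = integral {0..L} (\<lambda>s. (1 + N * c) * (green_kernel k L x s * p s) - N * W * (area_kernel k L s * p s))"
    by (rule integral_cong) (simp add: algebra_simps)
  also have "\<dots> = (1 + N * c) * G - N * W * A"
    unfolding G_def A_def
    by (simp add: integral_diff[OF integrable_on_mult_right[OF Gp] integrable_on_mult_right[OF Ap]])
  also have "A = I + N * I * c"
    using integral_y_representation by (simp add: A_def c_def algebra_simps)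
  also have "G = - k * sinh (k * L) * y2 x + N * I * W"
    using y2_green_representation[OF x] by (simp add: G_def W_def algebra_simps)
  finally show ?thesis by (simp add: algebra_simps)
qed

lemma y2_nonpos_if_load_nonneg:
  assumes N: "0 \<le> N" "N \<le> 4 * M / L ^ 3 * sigma (sqrt M * L)"
    and p: "AE x in lebesgue. x \<in> {0..L} \<longrightarrow> 0 \<le> p x" and x: "x \<in> {0..L}"
  shows "y2 x \<le> 0"
proof -
  define c K where "c = integral {0..L} (area_kernel k L)"
    and "K s = (1 + N * c) * green_kernel k L x s - N * integral {0..L} (green_kernel k L x) * area_kernel k L s" for s
  have gap: "N * (kernel_ratio_bound k L - c) \<le> 1"
    using sigma_bound_imp_kernel_gap_le[OF k_pos L_pos N(1)] N(2) M_pos by (simp add: c_def)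
  have "0 \<le> integral {0..L} (\<lambda>s. K s * p s)"
  proof (rule integral_nonneg_AE_lebesgue)
    show "(\<lambda>s. K s * p s) integrable_on {0..L}"
      unfolding K_def using k_pos
      by (intro set_lebesgue_integral_eq_integral(1) absolutely_integrable_continuous_mult load_integrable
          continuous_intros continuous_on_green_kernel continuous_on_area_kernel) simp
    show "AE s in lebesgue. s \<in> {0..L} \<longrightarrow> 0 \<le> K s * p s"
      using p by eventually_elim
        (use load_kernel_nonneg[OF k_pos L_pos N(1) gap[unfolded c_def] x] in \<open>simp add: K_def c_def\<close>)
  qed
  then have "0 \<le> ((1 + N * c) * (k * sinh (k * L))) * (- y2 x)"
    using y2_load_representation[OF x] by (simp add: K_def c_def algebra_simps)
  moreover have "0 < (1 + N * c) * (k * sinh (k * L))"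
    using one_plus_mult_integral_area_kernel_pos[OF k_pos L_pos N(1) gap[unfolded c_def]] k_pos L_pos
    by (simp add: c_def)
  ultimately show ?thesis
    using zero_le_mult_iff[of "(1 + N * c) * (k * sinh (k * L))" "- y2 x"] by linarith
qed

lemma solution_sign_if_load_nonneg:
  assumes "0 \<le> N" "N \<le> 4 * M / L ^ 3 * sigma (sqrt M * L)"
    and "AE x in lebesgue. x \<in> {0..L} \<longrightarrow> 0 \<le> p x"
  shows "\<forall>x\<in>{0..L}. 0 \<le> y x \<and> y2 x \<le> 0"
  using y2_nonpos_if_load_nonneg[OF assms] y_nonneg_if_y2_nonpos by blast

end

lemma W41_on_uminus:
  assumes "W41_on L y y1 y2 y3 y4"
  shows "W41_on L (\<lambda>x. - y x) (\<lambda>x. - y1 x) (\<lambda>x. - y2 x) (\<lambda>x. - y3 x) (\<lambda>x. - y4 x)"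
proof -
  have derivs: "\<forall>x\<in>{0..L}. (y has_real_derivative y1 x) (at x within {0..L})
      \<and> (y1 has_real_derivative y2 x) (at x within {0..L}) \<and> (y2 has_real_derivative y3 x) (at x within {0..L})"
    and y4: "y4 absolutely_integrable_on {0..L}" and y3: "\<forall>x\<in>{0..L}. y3 x = y3 0 + integral {0..x} y4"
    using assms unfolding W41_on_def by blast+
  show ?thesis
    unfolding W41_on_def
  proof (intro conjI)
    show "\<forall>x\<in>{0..L}. ((\<lambda>x. - y x) has_real_derivative - y1 x) (at x within {0..L})
      \<and> ((\<lambda>x. - y1 x) has_real_derivative - y2 x) (at x within {0..L})
      \<and> ((\<lambda>x. - y2 x) has_real_derivative - y3 x) (at x within {0..L})"
      using derivs by (blast intro: DERIV_minus)
    show "(\<lambda>x. - y4 x) absolutely_integrable_on {0..L}"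
      using y4 by (rule absolutely_integrable_on_uminus)
    show "\<forall>x\<in>{0..L}. - y3 x = - y3 0 + integral {0..x} (\<lambda>x. - y4 x)"
    proof
      fix x assume "x \<in> {0..L}"
      then have "y3 x = y3 0 + integral {0..x} y4" using y3 by blast
      then show "- y3 x = - y3 0 + integral {0..x} (\<lambda>x. - y4 x)" by simp
    qed
  qed
qed

lemma nonlocal_beam_uminus:
  assumes "nonlocal_beam L M N p y y1 y2 y3 y4"
  shows "nonlocal_beam L M N (\<lambda>x. - p x) (\<lambda>x. - y x) (\<lambda>x. - y1 x) (\<lambda>x. - y2 x) (\<lambda>x. - y3 x) (\<lambda>x. - y4 x)"
proof -
  interpret nonlocal_beam L M N p y y1 y2 y3 y4 by (fact assms)
  show ?thesis
  proof
    show "(\<lambda>x. - p x) absolutely_integrable_on {0..L}"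
      using load_integrable by (rule absolutely_integrable_on_uminus)
    show "W41_on L (\<lambda>x. - y x) (\<lambda>x. - y1 x) (\<lambda>x. - y2 x) (\<lambda>x. - y3 x) (\<lambda>x. - y4 x)"
      using regular by (rule W41_on_uminus)
    show "AE x in lebesgue. x \<in> {0..L} \<longrightarrow> - y4 x - M * - y2 x + N * integral {0..L} (\<lambda>x. - y x) = - p x"
      using equation by eventually_elim (simp add: algebra_simps)
  qed (use L_pos M_pos boundary in simp_all)
qed

theorem theorem3p1:
  fixes L M N :: real and p y y1 y2 y3 y4 :: "real \<Rightarrow> real"
  assumes "L > 0" and "M > 0"
    and "0 \<le> N" and "N \<le> 4 * M / L ^ 3 * sigma (sqrt M * L)"
    and "p absolutely_integrable_on {0..L}"
    and "W41_on L y y1 y2 y3 y4"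
    and "AE x in lebesgue. x \<in> {0..L} \<longrightarrow>
           y4 x - M * y2 x + N * integral {0..L} y = p x"
    and "y 0 = 0" and "y L = 0" and "y2 0 = 0" and "y2 L = 0"
  shows "((AE x in lebesgue. x \<in> {0..L} \<longrightarrow> p x \<ge> 0) \<longrightarrow>
            (\<forall>x\<in>{0..L}. y x \<ge> 0 \<and> y2 x \<le> 0))
       \<and> ((AE x in lebesgue. x \<in> {0..L} \<longrightarrow> p x \<le> 0) \<longrightarrow>
            (\<forall>x\<in>{0..L}. y x \<le> 0 \<and> y2 x \<ge> 0))"
proof (intro conjI impI)
  have beam: "nonlocal_beam L M N p y y1 y2 y3 y4"
    using assms by unfold_locales
  show "\<forall>x\<in>{0..L}. y x \<ge> 0 \<and> y2 x \<le> 0" if "AE x in lebesgue. x \<in> {0..L} \<longrightarrow> p x \<ge> 0"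
    using nonlocal_beam.solution_sign_if_load_nonneg[OF beam assms(3,4) that] .
  show "\<forall>x\<in>{0..L}. y x \<le> 0 \<and> y2 x \<ge> 0" if "AE x in lebesgue. x \<in> {0..L} \<longrightarrow> p x \<le> 0"
  proof -
    have "AE x in lebesgue. x \<in> {0..L} \<longrightarrow> 0 \<le> - p x"
      using that by eventually_elim simp
    from nonlocal_beam.solution_sign_if_load_nonneg[OF nonlocal_beam_uminus[OF beam] assms(3,4) this]
    show ?thesis by simp
  qed
qed

end
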